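(* For every integer $n\ge 6$ and every integer $t$ with $1\le t\le n-3$, $\mathrm{wdim}_{2n-2t-1}(K_n\times K_n)=n^2-tn-\left\lfloor \frac{n}{t+1}\right\rfloor$.
   Context: $K_n\times K_n$ is the direct product of two complete graphs on $n$ vertices: vertex set $[n]\times[n]$ with $[n]=\{1,\dots,n\}$, and $(i,j)$ adjacent to $(i',j')$ iff $i\ne i'$ and $j\ne j'$. For a connected graph $G$ with distance $d_G$, vertices $x,y,z$ and $S\subseteq V(G)$, let $\Delta_z(x,y)=|d_G(x,z)-d_G(y,z)|$ and $\Delta_S(x,y)=\sum_{z\in S}\Delta_z(x,y)$. A set $S$ is a weak $k$-resolving set if $\Delta_S(x,y)\ge k$ for all distinct $x,y\in V(G)$, and $\mathrm{wdim}_k(G)$ is the minimum cardinality of a weak $k$-resolving set of $G$. *)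

theory Defs
  imports Main
begin

fun walk :: "'a set \<Rightarrow> ('a \<Rightarrow> 'a \<Rightarrow> bool) \<Rightarrow> nat \<Rightarrow> 'a \<Rightarrow> 'a \<Rightarrow> bool" where
  "walk V adj 0 x y = (x \<in> V \<and> x = y)"
| "walk V adj (Suc k) x y = (x \<in> V \<and> (\<exists>w. adj x w \<and> walk V adj k w y))"

definition gdist :: "'a set \<Rightarrow> ('a \<Rightarrow> 'a \<Rightarrow> bool) \<Rightarrow> 'a \<Rightarrow> 'a \<Rightarrow> nat" where
  "gdist V adj x y = (LEAST k. walk V adj k x y)"

definition connected_graph :: "'a set \<Rightarrow> ('a \<Rightarrow> 'a \<Rightarrow> bool) \<Rightarrow> bool" where
  "connected_graph V adj \<longleftrightarrow> (\<forall>x\<in>V. \<forall>y\<in>V. \<exists>k. walk V adj k x y)"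

definition Delta :: "'a set \<Rightarrow> ('a \<Rightarrow> 'a \<Rightarrow> bool) \<Rightarrow> 'a \<Rightarrow> 'a \<Rightarrow> 'a \<Rightarrow> nat" where
  "Delta V adj z x y = nat \<bar>int (gdist V adj x z) - int (gdist V adj y z)\<bar>"

definition DeltaS :: "'a set \<Rightarrow> ('a \<Rightarrow> 'a \<Rightarrow> bool) \<Rightarrow> 'a set \<Rightarrow> 'a \<Rightarrow> 'a \<Rightarrow> nat" where
  "DeltaS V adj S x y = (\<Sum>z\<in>S. Delta V adj z x y)"

definition weak_k_resolving :: "'a set \<Rightarrow> ('a \<Rightarrow> 'a \<Rightarrow> bool) \<Rightarrow> nat \<Rightarrow> 'a set \<Rightarrow> bool" where
  "weak_k_resolving V adj k S \<longleftrightarrow> S \<subseteq> V \<and>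
     (\<forall>x\<in>V. \<forall>y\<in>V. x \<noteq> y \<longrightarrow> DeltaS V adj S x y \<ge> k)"

definition wdim :: "'a set \<Rightarrow> ('a \<Rightarrow> 'a \<Rightarrow> bool) \<Rightarrow> nat \<Rightarrow> nat" where
  "wdim V adj k = Min (card ` {S. weak_k_resolving V adj k S})"

(* K_n \<times> K_n: vertex set [n]\<times>[n], (i,j) ~ (i',j') iff i\<noteq>i' and j\<noteq>j' *)
definition KK_V :: "nat \<Rightarrow> (nat \<times> nat) set" where
  "KK_V n = {1..n} \<times> {1..n}"

definition KK_adj :: "(nat \<times> nat) \<Rightarrow> (nat \<times> nat) \<Rightarrow> bool" where
  "KK_adj p q \<longleftrightarrow> fst p \<noteq> fst q \<and> snd p \<noteq> snd q"

end

theory Submission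
  imports Defs
begin

text \<open>
In \<open>K\<^sub>n \<times> K\<^sub>n\<close> with \<open>n \<ge> 3\<close> distinct vertices are at distance 1 or 2, so \<open>\<Delta>\<^sub>S(x,y)\<close> is a
count of the vertices of \<open>S\<close> in the rows and columns through \<open>x\<close> and \<open>y\<close>.  It is best to work
with the complement \<open>T = V - S\<close>: \<open>S\<close> is weak \<open>k\<close>-resolving iff
\<open>\<Delta>\<^sub>T(x,y) + k \<le> \<Delta>\<^sub>V(x,y)\<close> for all pairs.  For two vertices in one column this reads
\<open>|T\<^sub>i| + |T\<^sub>i\<^sub>'| + [x \<in> T] + [y \<in> T] \<le> 2t + 3\<close> for the rows \<open>T\<^sub>i, T\<^sub>i\<^sub>'\<close> of \<open>T\<close>.  Rows of size
\<open>t + 1\<close> must then be pairwise disjoint, so there are at most \<open>\<lfloor>n/(t+1)\<rfloor>\<close> of them, while one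
row of size \<open>\<ge> t + 2\<close> forces every other row to have size \<open>\<le> t\<close>, and even \<open>\<le> t - 1\<close>
unless \<open>n \<ge> 2t + 2\<close>; in all cases \<open>|T| \<le> nt + \<lfloor>n/(t+1)\<rfloor>\<close>.

The bound is attained by the cyclic band of width \<open>t\<close> together with one corner \<open>(a, a + t)\<close> for
each of the \<open>\<lfloor>n/(t+1)\<rfloor>\<close> disjoint blocks \<open>{a..a+t}\<close>: rows and columns of the band have \<open>t\<close>
cells, and the row \<open>a\<close> and the column \<open>a + t\<close> of a block become that block.  Pairs in a common
row or column are handled by the disjointness of the blocks; for a general pair the only
critical cases are \<open>n \<le> t + 4\<close>, where there are at most two blocks and a pair using several
blocked rows and columns necessarily contains a corner.
\<close>

lemma DeltaS_Diff:
  assumes "finite V" "T \<subseteq> V"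
  shows "DeltaS V adj V x y = DeltaS V adj (V - T) x y + DeltaS V adj T x y"
  unfolding DeltaS_def by (rule sum.subset_diff[OF assms(2,1)])

lemma weak_k_resolving_Diff_iff:
  assumes "finite V" "T \<subseteq> V"
  shows "weak_k_resolving V adj k (V - T) \<longleftrightarrow>
    (\<forall>x\<in>V. \<forall>y\<in>V. x \<noteq> y \<longrightarrow> DeltaS V adj T x y + k \<le> DeltaS V adj V x y)"
  using DeltaS_Diff[OF assms] by (auto simp: weak_k_resolving_def)

lemma wdim_eqI:
  assumes "finite V" "weak_k_resolving V adj k S"
    and "\<And>S'. weak_k_resolving V adj k S' \<Longrightarrow> card S \<le> card S'"
  shows "wdim V adj k = card S"
proof -
  have "{S. weak_k_resolving V adj k S} \<subseteq> Pow V"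
    by (auto simp: weak_k_resolving_def)
  then have "finite (card ` {S. weak_k_resolving V adj k S})"
    using assms(1) by (meson finite_Pow_iff finite_imageI finite_subset)
  then show ?thesis
    unfolding wdim_def using assms(2,3) by (intro Min_eqI) auto
qed

lemma sum_card_le_of_disjoint_large:
  fixes R :: "'i \<Rightarrow> 'a set"
  assumes "finite I" "finite G" "\<And>i. i \<in> I \<Longrightarrow> R i \<subseteq> G"
    and small: "\<And>i. i \<in> I \<Longrightarrow> card (R i) \<le> t + 1"
    and disj: "\<And>i i'. i \<in> I \<Longrightarrow> i' \<in> I \<Longrightarrow> i \<noteq> i' \<Longrightarrow> card (R i) = t + 1 \<Longrightarrow>
      card (R i') = t + 1 \<Longrightarrow> R i \<inter> R i' = {}"
  shows "(\<Sum>i\<in>I. card (R i)) \<le> card I * t + card G div (t + 1)"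
proof -
  define L where "L = {i\<in>I. card (R i) = t + 1}"
  have "(\<Sum>i\<in>I. card (R i)) \<le> (\<Sum>i\<in>I. t + of_bool (i \<in> L))"
    by (rule sum_mono) (use small in \<open>force simp: L_def\<close>)
  also have "\<dots> = card I * t + card L"
    using assms(1) by (simp add: sum.distrib L_def Int_def)
  finally have sum_le: "(\<Sum>i\<in>I. card (R i)) \<le> card I * t + card L" .
  have "card L * (t + 1) = card (\<Union>i\<in>L. R i)"
    using assms(1,2,3) disj by (subst card_UN_disjoint) (auto simp: L_def intro: finite_subset)
  also have "\<dots> \<le> card G"
    using assms(2,3) by (intro card_mono) (auto simp: L_def)
  finally have "card L \<le> card G div (t + 1)"
    by (simp add: less_eq_div_iff_mult_less_eq)
  with sum_le show ?thesis by linarith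
qed

lemma sum_le_of_bounded_off:
  fixes f :: "'i \<Rightarrow> nat"
  assumes "finite I" "i\<^sub>0 \<in> I" "\<And>i. i \<in> I - {i\<^sub>0} \<Longrightarrow> f i \<le> c"
  shows "(\<Sum>i\<in>I. f i) \<le> f i\<^sub>0 + (card I - 1) * c"
proof -
  have "(\<Sum>i\<in>I - {i\<^sub>0}. f i) \<le> card (I - {i\<^sub>0}) * c"
    using sum_bounded_above[of "I - {i\<^sub>0}" f c] assms(3) by simp
  then show ?thesis
    using assms(1,2) by (simp add: sum.remove)
qed

lemma Int_nonempty_of_card_gt:
  assumes "finite G" "A \<subseteq> G" "B \<subseteq> G" "card G < card A + card B"
  shows "A \<inter> B \<noteq> {}"
proof
  assume "A \<inter> B = {}"
  then have "card A + card B = card (A \<union> B)"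
    using assms(1-3) by (metis card_Un_disjoint finite_subset)
  also have "\<dots> \<le> card G"
    using assms(1-3) by (intro card_mono) auto
  finally show False using assms(4) by linarith
qed

lemma add_mult_diff_le_mult:
  fixes t M m :: nat
  assumes "t + 3 \<le> M" "M \<le> 2 * t + 2" "4 \<le> m"
  shows "M + (m - 1) * (2 * t + 2 - M) \<le> m * t"
proof -
  define s u k where "s = 2 * t + 2 - M" and "u = M - t - 3" and "k = m - 4"
  have "t = s + u + 1" "M = s + 2 * u + 4" "m = k + 4" "2 * t + 2 - M = s"
    using assms unfolding s_def u_def k_def by simp_all
  then show ?thesis by (simp add: algebra_simps)
qed

lemma sum_card_le_of_large_member:
  fixes R :: "'i \<Rightarrow> 'a set"
  assumes "finite I" "card I \<ge> 4" "finite G" "\<And>i. i \<in> I \<Longrightarrow> R i \<subseteq> G"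
    and "i\<^sub>0 \<in> I" "card (R i\<^sub>0) \<ge> t + 2"
    and meet: "\<And>i. i \<in> I - {i\<^sub>0} \<Longrightarrow> card (R i) + card (R i\<^sub>0) \<le> 2 * t + 2"
    and cross: "\<And>i. i \<in> I - {i\<^sub>0} \<Longrightarrow> R i \<inter> R i\<^sub>0 \<noteq> {} \<Longrightarrow>
      card (R i) + card (R i\<^sub>0) \<le> 2 * t + 1"
  shows "(\<Sum>i\<in>I. card (R i)) \<le> card I * t + card G div (t + 1)"
proof -
  define M where "M = card (R i\<^sub>0)"
  note sum_le = sum_le_of_bounded_off[OF assms(1,5), of "\<lambda>i. card (R i)", folded M_def]
  have "card (I - {i\<^sub>0}) \<noteq> 0" using assms(1,2,5) by (simp add: card_Diff_singleton)
  then obtain i\<^sub>1 where "i\<^sub>1 \<in> I - {i\<^sub>0}" by (metis card.empty ex_in_conv)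
  have "M \<le> card G" using assms(3,4,5) M_def by (simp add: card_mono)
  consider "M \<ge> t + 3" | "M = t + 2" "card G \<ge> 2 * t + 2" | "M = t + 2" "card G < 2 * t + 2"
    using assms(6) M_def by linarith
  then show ?thesis
  proof cases
    case 1
    have "(\<Sum>i\<in>I. card (R i)) \<le> M + (card I - 1) * (2 * t + 2 - M)"
      using meet M_def by (intro sum_le) fastforce
    also have "\<dots> \<le> card I * t"
      using 1 meet[OF \<open>i\<^sub>1 \<in> I - {i\<^sub>0}\<close>] assms(2) M_def by (intro add_mult_diff_le_mult) simp_all
    finally show ?thesis by simp
  next
    case 2
    have "(\<Sum>i\<in>I. card (R i)) \<le> M + (card I - 1) * t"
      using meet 2(1) M_def by (intro sum_le) fastforce
    also have "\<dots> \<le> card I * t + 2"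
      using 2(1) assms(2) by (cases "card I") auto
    also have "2 \<le> card G div (t + 1)"
      using 2(2) by (simp add: less_eq_div_iff_mult_less_eq)
    finally show ?thesis by simp
  next
    case 3
    have "card (R i) \<le> t - 1" if i: "i \<in> I - {i\<^sub>0}" for i
    proof (rule ccontr)
      assume "\<not> card (R i) \<le> t - 1"
      then have "card (R i) = t" using meet[OF i] 3(1) M_def by linarith
      moreover have "R i \<inter> R i\<^sub>0 \<noteq> {}"
        using 3 \<open>card (R i) = t\<close> assms(3,4,5) i M_def by (intro Int_nonempty_of_card_gt) auto
      ultimately show False using cross[OF i] 3(1) M_def by linarith
    qed
    then have "(\<Sum>i\<in>I. card (R i)) \<le> M + (card I - 1) * (t - 1)"
      by (rule sum_le)
    also have "\<dots> \<le> card I * t"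
      using 3 \<open>M \<le> card G\<close> assms(2) by (cases "card I"; cases t) (auto simp: algebra_simps)
    finally show ?thesis by simp
  qed
qed

lemma sum_card_le_of_pair_bound:
  fixes R :: "'i \<Rightarrow> 'a set"
  assumes "finite I" "card I \<ge> 4" "finite G" "\<And>i. i \<in> I \<Longrightarrow> R i \<subseteq> G"
    and pair: "\<And>i i' j. i \<in> I \<Longrightarrow> i' \<in> I \<Longrightarrow> i \<noteq> i' \<Longrightarrow> j \<in> G \<Longrightarrow>
      card (R i) + card (R i') + of_bool (j \<in> R i) + of_bool (j \<in> R i') \<le> 2 * t + 3"
  shows "(\<Sum>i\<in>I. card (R i)) \<le> card I * t + card G div (t + 1)"
proof -
  have meet: "card (R i) + card (R i') \<le> 2 * t + 2"
    if ii': "i \<in> I" "i' \<in> I" "i \<noteq> i'" and "R i \<noteq> {}" for i i'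
  proof -
    obtain j where "j \<in> R i" using \<open>R i \<noteq> {}\<close> by blast
    then show ?thesis using pair[OF ii', of j] assms(4)[OF ii'(1)] by auto
  qed
  have cross: "card (R i) + card (R i') \<le> 2 * t + 1"
    if ii': "i \<in> I" "i' \<in> I" "i \<noteq> i'" and "R i \<inter> R i' \<noteq> {}" for i i'
  proof -
    obtain j where "j \<in> R i" "j \<in> R i'" using \<open>R i \<inter> R i' \<noteq> {}\<close> by blast
    then show ?thesis using pair[OF ii', of j] assms(4)[OF ii'(1)] by auto
  qed
  show ?thesis
  proof (cases "\<forall>i\<in>I. card (R i) \<le> t + 1")
    case True
    show ?thesis
      using assms(1,3,4) True cross by (intro sum_card_le_of_disjoint_large) fastforce+
  next
    case False
    then obtain i\<^sub>0 where i\<^sub>0: "i\<^sub>0 \<in> I" "card (R i\<^sub>0) \<ge> t + 2" by force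
    then have "R i\<^sub>0 \<noteq> {}" by force
    show ?thesis
    proof (rule sum_card_le_of_large_member[where R = R, OF assms(1-4) i\<^sub>0])
      fix i assume "i \<in> I - {i\<^sub>0}"
      then show "card (R i) + card (R i\<^sub>0) \<le> 2 * t + 2"
        using meet[of i\<^sub>0 i] i\<^sub>0(1) \<open>R i\<^sub>0 \<noteq> {}\<close> by (auto simp: add.commute)
    next
      fix i assume "i \<in> I - {i\<^sub>0}" "R i \<inter> R i\<^sub>0 \<noteq> {}"
      then show "card (R i) + card (R i\<^sub>0) \<le> 2 * t + 1"
        using cross[of i i\<^sub>0] i\<^sub>0(1) by simp
    qed
  qed
qed

lemma finite_KK_V: "finite (KK_V n)"
  by (simp add: KK_V_def)

lemma KK_common_neighbour:
  assumes "n \<ge> 3" "x \<in> KK_V n" "z \<in> KK_V n"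
  shows "\<exists>w\<in>KK_V n. KK_adj x w \<and> KK_adj w z"
proof -
  have avoid: "\<exists>p\<in>{1..n}. p \<noteq> a \<and> p \<noteq> c" for a c
  proof -
    have "\<exists>p\<in>{1, 2, 3}. p \<noteq> a \<and> p \<noteq> c" by auto
    then show ?thesis using assms(1) by auto
  qed
  obtain p where "p \<in> {1..n}" "p \<noteq> fst x" "p \<noteq> fst z" using avoid by blast
  moreover obtain r where "r \<in> {1..n}" "r \<noteq> snd x" "r \<noteq> snd z" using avoid by blast
  ultimately show ?thesis by (intro bexI[of _ "(p, r)"]) (auto simp: KK_adj_def KK_V_def)
qed

lemma gdist_KK:
  assumes "n \<ge> 3" "x \<in> KK_V n" "z \<in> KK_V n"
  shows "gdist (KK_V n) KK_adj x z = (if x = z then 0 else if KK_adj x z then 1 else 2)"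
proof -
  have irrefl: "\<not> KK_adj x x" by (simp add: KK_adj_def)
  have walk2: "walk (KK_V n) KK_adj 2 x z"
  proof -
    obtain w where "w \<in> KK_V n" "KK_adj x w" "KK_adj w z"
      using KK_common_neighbour[OF assms] by blast
    then have "walk (KK_V n) KK_adj (Suc 0) w z" using assms(3) by (simp del: split_paired_Ex)
    with \<open>KK_adj x w\<close> show ?thesis
      using assms(2) by (simp only: numeral_2_eq_2 walk.simps(2)) blast
  qed
  show ?thesis unfolding gdist_def
  proof (intro Least_equality)
    show "walk (KK_V n) KK_adj (if x = z then 0 else if KK_adj x z then 1 else 2) x z"
      using walk2 assms(2,3) by (auto simp del: split_paired_Ex)
    show "(if x = z then 0 else if KK_adj x z then 1 else 2) \<le> k"
      if "walk (KK_V n) KK_adj k x z" for k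
      using that irrefl by (cases k; cases "k - 1") auto
  qed
qed

definition row :: "(nat \<times> nat) set \<Rightarrow> nat \<Rightarrow> nat set" where
  "row S i = {j. (i, j) \<in> S}"

definition col :: "(nat \<times> nat) set \<Rightarrow> nat \<Rightarrow> nat set" where
  "col S j = {i. (i, j) \<in> S}"

lemma card_row: "card (row S i) = card (S \<inter> {z. fst z = i})"
proof -
  have "S \<inter> {z. fst z = i} = Pair i ` row S i" by (auto simp: row_def)
  then show ?thesis by (simp add: card_image inj_on_def)
qed

lemma card_col: "card (col S j) = card (S \<inter> {z. snd z = j})"
proof -
  have "S \<inter> {z. snd z = j} = (\<lambda>i. (i, j)) ` col S j" by (auto simp: col_def)
  then show ?thesis by (simp add: card_image inj_on_def)
qed

lemma card_KK_by_rows: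
  assumes "S \<subseteq> KK_V n"
  shows "card S = (\<Sum>i\<in>{1..n}. card (row S i))"
proof -
  have "S = (SIGMA i:{1..n}. row S i)" using assms by (auto simp: row_def KK_V_def)
  moreover have "row S i \<subseteq> {1..n}" for i using assms by (auto simp: row_def KK_V_def)
  ultimately show ?thesis by (metis card_SigmaI finite_atLeastAtMost finite_subset)
qed

lemma DeltaS_KK_same_col:
  assumes "n \<ge> 3" "S \<subseteq> KK_V n" "(i, j) \<in> KK_V n" "(i', j) \<in> KK_V n" "i \<noteq> i'"
  shows "DeltaS (KK_V n) KK_adj S (i, j) (i', j) =
    of_bool ((i, j) \<in> S) + of_bool ((i', j) \<in> S) + card (row S i) + card (row S i')"
proof -
  have "finite S" using assms(2) finite_KK_V finite_subset by blast
  have "DeltaS (KK_V n) KK_adj S (i, j) (i', j) =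
      (\<Sum>z\<in>S. of_bool (z = (i, j)) + of_bool (z = (i', j)) + of_bool (fst z = i) + of_bool (fst z = i'))"
    unfolding DeltaS_def
    using assms
    by (intro sum.cong) (auto simp: Delta_def gdist_KK KK_adj_def dest!: subsetD[OF assms(2)])
  then show ?thesis using \<open>finite S\<close> by (simp add: sum.distrib card_row)
qed

lemma DeltaS_KK_same_row:
  assumes "n \<ge> 3" "S \<subseteq> KK_V n" "(i, j) \<in> KK_V n" "(i, j') \<in> KK_V n" "j \<noteq> j'"
  shows "DeltaS (KK_V n) KK_adj S (i, j) (i, j') =
    of_bool ((i, j) \<in> S) + of_bool ((i, j') \<in> S) + card (col S j) + card (col S j')"
proof -
  have "finite S" using assms(2) finite_KK_V finite_subset by blast
  have "DeltaS (KK_V n) KK_adj S (i, j) (i, j') =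
      (\<Sum>z\<in>S. of_bool (z = (i, j)) + of_bool (z = (i, j')) + of_bool (snd z = j) + of_bool (snd z = j'))"
    unfolding DeltaS_def
    using assms
    by (intro sum.cong) (auto simp: Delta_def gdist_KK KK_adj_def dest!: subsetD[OF assms(2)])
  then show ?thesis using \<open>finite S\<close> by (simp add: sum.distrib card_col)
qed

lemma Delta_KK_general:
  assumes "n \<ge> 3" "z \<in> KK_V n" "(i, j) \<in> KK_V n" "(i', j') \<in> KK_V n" "i \<noteq> i'" "j \<noteq> j'"
  shows "Delta (KK_V n) KK_adj z (i, j) (i', j')
      + of_bool (z = (i, j)) + of_bool (z = (i', j')) + 2 * of_bool (z = (i, j')) + 2 * of_bool (z = (i', j))
    = of_bool (fst z = i) + of_bool (fst z = i') + of_bool (snd z = j) + of_bool (snd z = j')"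
proof -
  obtain a b where z: "z = (a, b)" by (cases z)
  with assms(2) have "(a, b) \<in> KK_V n" by simp
  show ?thesis
    unfolding z Delta_def gdist_KK[OF assms(1,3) \<open>(a, b) \<in> KK_V n\<close>]
      gdist_KK[OF assms(1,4) \<open>(a, b) \<in> KK_V n\<close>]
    using assms(5,6)
    by (cases "a = i"; cases "a = i'"; cases "b = j"; cases "b = j'") (simp_all add: KK_adj_def)
qed

lemma DeltaS_KK_general:
  assumes "n \<ge> 3" "S \<subseteq> KK_V n" "(i, j) \<in> KK_V n" "(i', j') \<in> KK_V n" "i \<noteq> i'" "j \<noteq> j'"
  shows "DeltaS (KK_V n) KK_adj S (i, j) (i', j')
      + of_bool ((i, j) \<in> S) + of_bool ((i', j') \<in> S)
      + 2 * of_bool ((i, j') \<in> S) + 2 * of_bool ((i', j) \<in> S)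
    = card (row S i) + card (row S i') + card (col S j) + card (col S j')"
proof -
  have "finite S" using assms(2) finite_KK_V finite_subset by blast
  have [simp]: "card (S \<inter> {p}) = of_bool (p \<in> S)" for p by auto
  have "(\<Sum>z\<in>S. Delta (KK_V n) KK_adj z (i, j) (i', j')
      + of_bool (z = (i, j)) + of_bool (z = (i', j')) + 2 * of_bool (z = (i, j')) + 2 * of_bool (z = (i', j)))
    = (\<Sum>z\<in>S. of_bool (fst z = i) + of_bool (fst z = i') + of_bool (snd z = j) + of_bool (snd z = j'))"
    by (rule sum.cong[OF refl], rule Delta_KK_general[OF assms(1) _ assms(3-6)]) (use assms(2) in blast)
  then show ?thesis
    using \<open>finite S\<close> by (simp add: DeltaS_def sum.distrib card_row card_col flip: sum_distrib_left)
qed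

lemma row_KK_V: "i \<in> {1..n} \<Longrightarrow> row (KK_V n) i = {1..n}"
  by (auto simp: row_def KK_V_def)

lemma col_KK_V: "j \<in> {1..n} \<Longrightarrow> col (KK_V n) j = {1..n}"
  by (auto simp: col_def KK_V_def)

lemma DeltaS_KK_V_same_col:
  assumes "n \<ge> 3" "(i, j) \<in> KK_V n" "(i', j) \<in> KK_V n" "i \<noteq> i'"
  shows "DeltaS (KK_V n) KK_adj (KK_V n) (i, j) (i', j) = 2 * n + 2"
proof -
  have "i \<in> {1..n}" "i' \<in> {1..n}" using assms(2,3) by (auto simp: KK_V_def)
  then show ?thesis
    using DeltaS_KK_same_col[OF assms(1) subset_refl assms(2-4)] assms(2,3) by (simp add: row_KK_V)
qed

lemma DeltaS_KK_V_same_row: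
  assumes "n \<ge> 3" "(i, j) \<in> KK_V n" "(i, j') \<in> KK_V n" "j \<noteq> j'"
  shows "DeltaS (KK_V n) KK_adj (KK_V n) (i, j) (i, j') = 2 * n + 2"
proof -
  have "j \<in> {1..n}" "j' \<in> {1..n}" using assms(2,3) by (auto simp: KK_V_def)
  then show ?thesis
    using DeltaS_KK_same_row[OF assms(1) subset_refl assms(2-4)] assms(2,3) by (simp add: col_KK_V)
qed

lemma DeltaS_KK_V_general:
  assumes "n \<ge> 3" "(i, j) \<in> KK_V n" "(i', j') \<in> KK_V n" "i \<noteq> i'" "j \<noteq> j'"
  shows "DeltaS (KK_V n) KK_adj (KK_V n) (i, j) (i', j') + 6 = 4 * n"
proof -
  have "i \<in> {1..n}" "i' \<in> {1..n}" "j \<in> {1..n}" "j' \<in> {1..n}"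
    using assms(2,3) by (auto simp: KK_V_def)
  moreover have "(i, j') \<in> KK_V n" "(i', j) \<in> KK_V n"
    using assms(2,3) by (auto simp: KK_V_def)
  ultimately show ?thesis
    using DeltaS_KK_general[OF assms(1) subset_refl assms(2-5)] assms(2,3)
    by (simp add: row_KK_V col_KK_V)
qed

lemma card_Diff_le_of_weak_resolving:
  assumes "n \<ge> 4" "t < n"
    and resolving: "weak_k_resolving (KK_V n) KK_adj (2 * n - 2 * t - 1) S"
  shows "card (KK_V n - S) \<le> n * t + n div (t + 1)"
proof -
  define T where "T = KK_V n - S"
  have "T \<subseteq> KK_V n" by (simp add: T_def)
  have "S = KK_V n - T" using resolving by (auto simp: T_def weak_k_resolving_def)
  then have T_bound:
      "DeltaS (KK_V n) KK_adj T x y + (2 * n - 2 * t - 1) \<le> DeltaS (KK_V n) KK_adj (KK_V n) x y"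
    if "x \<in> KK_V n" "y \<in> KK_V n" "x \<noteq> y" for x y
    using resolving that weak_k_resolving_Diff_iff[OF finite_KK_V \<open>T \<subseteq> KK_V n\<close>] by auto
  have "(\<Sum>i\<in>{1..n}. card (row T i)) \<le> card {1..n} * t + card {1..n} div (t + 1)"
  proof (rule sum_card_le_of_pair_bound)
    show "row T i \<subseteq> {1..n}" for i
      using \<open>T \<subseteq> KK_V n\<close> by (auto simp: row_def KK_V_def)
    fix i i' j assume "i \<in> {1..n}" "i' \<in> {1..n}" "i \<noteq> i'" "j \<in> {1..n}"
    then have "(i, j) \<in> KK_V n" "(i', j) \<in> KK_V n" by (auto simp: KK_V_def)
    from T_bound[OF this] \<open>i \<noteq> i'\<close> assms(1,2)
      DeltaS_KK_same_col[OF _ \<open>T \<subseteq> KK_V n\<close> this \<open>i \<noteq> i'\<close>]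
      DeltaS_KK_V_same_col[OF _ this \<open>i \<noteq> i'\<close>]
    show "card (row T i) + card (row T i') + of_bool (j \<in> row T i) + of_bool (j \<in> row T i') \<le> 2 * t + 3"
      by (simp add: row_def)
  qed (use assms(1) in auto)
  then show ?thesis
    using card_KK_by_rows[OF \<open>T \<subseteq> KK_V n\<close>] by (simp add: T_def mult.commute)
qed

definition corner_rows :: "nat \<Rightarrow> nat \<Rightarrow> nat set" where
  "corner_rows n t = (\<lambda>k. k * (t + 1) + 1) ` {..<n div (t + 1)}"

definition corner_cols :: "nat \<Rightarrow> nat \<Rightarrow> nat set" where
  "corner_cols n t = (\<lambda>a. a + t) ` corner_rows n t"

(* the cells (i, j) with j - i congruent to one of 0, ..., t - 1 modulo n *)
definition KK_band :: "nat \<Rightarrow> nat \<Rightarrow> (nat \<times> nat) set" where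
  "KK_band n t = {(i, j) \<in> KK_V n. i \<le> j \<and> j < i + t \<or> j + n < i + t}"

definition band_with_corners :: "nat \<Rightarrow> nat \<Rightarrow> (nat \<times> nat) set" where
  "band_with_corners n t = KK_band n t \<union> (\<lambda>a. (a, a + t)) ` corner_rows n t"

lemma corner_rows_bounds:
  assumes "a \<in> corner_rows n t"
  shows "1 \<le> a" "a + t \<le> n"
proof -
  obtain k where k: "k < n div (t + 1)" "a = k * (t + 1) + 1"
    using assms by (auto simp: corner_rows_def)
  have "(k + 1) * (t + 1) \<le> n div (t + 1) * (t + 1)"
    using k(1) by (intro mult_le_mono1) simp
  also have "\<dots> \<le> n" by (rule div_times_less_eq_dividend)
  finally show "1 \<le> a" "a + t \<le> n" using k(2) by simp_all
qed

lemma corner_rows_gap: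
  assumes "a \<in> corner_rows n t" "a' \<in> corner_rows n t" "a < a'"
  shows "a + t < a'"
proof -
  obtain k k' where "a = k * (t + 1) + 1" "a' = k' * (t + 1) + 1"
    using assms(1,2) by (auto simp: corner_rows_def)
  with assms(3) have "k < k'" by (simp del: mult_Suc_right)
  then have "(k + 1) * (t + 1) \<le> k' * (t + 1)" by (intro mult_le_mono1) simp
  then show ?thesis using \<open>a = _\<close> \<open>a' = _\<close> by simp
qed

lemma card_corner_rows: "card (corner_rows n t) = n div (t + 1)"
  unfolding corner_rows_def by (subst card_image) (auto simp: inj_on_def simp del: mult_Suc_right)

lemma corner_blocks_disjoint:
  assumes "a \<in> corner_rows n t" "a' \<in> corner_rows n t" "a \<noteq> a'"
  shows "{a..a + t} \<inter> {a'..a' + t} = {}"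
  using corner_rows_gap[OF assms(1,2)] corner_rows_gap[OF assms(2,1)] assms(3)
  by (cases "a < a'") auto

lemma card_row_KK_band:
  assumes "i \<in> {1..n}" "t \<le> n"
  shows "card (row (KK_band n t) i) = t"
proof -
  have "row (KK_band n t) i = {i..<min (n + 1) (i + t)} \<union> {1..<i + t - n}"
    using assms by (auto simp: row_def KK_band_def KK_V_def)
  moreover have "{i..<min (n + 1) (i + t)} \<inter> {1..<i + t - n} = {}"
    using assms by auto
  ultimately show ?thesis
    using assms by (simp add: card_Un_disjoint)
qed

lemma card_col_KK_band:
  assumes "j \<in> {1..n}" "t \<le> n"
  shows "card (col (KK_band n t) j) = t"
proof -
  have "col (KK_band n t) j = {max 1 (j + 1 - t)..j} \<union> {j + n + 1 - t..n}"
    using assms by (auto simp: col_def KK_band_def KK_V_def)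
  moreover have "{max 1 (j + 1 - t)..j} \<inter> {j + n + 1 - t..n} = {}"
    using assms by auto
  ultimately show ?thesis
    using assms by (simp add: card_Un_disjoint)
qed

lemma row_band_with_corners:
  "row (band_with_corners n t) i = row (KK_band n t) i \<union> (if i \<in> corner_rows n t then {i + t} else {})"
  by (auto simp: row_def band_with_corners_def)

lemma col_band_with_corners:
  "col (band_with_corners n t) j = col (KK_band n t) j \<union> (if j \<in> corner_cols n t then {j - t} else {})"
  by (auto simp: col_def band_with_corners_def corner_cols_def)

lemma card_row_band_with_corners:
  assumes "i \<in> {1..n}" "t \<le> n"
  shows "card (row (band_with_corners n t) i) = t + of_bool (i \<in> corner_rows n t)"
proof -
  have "i + t \<notin> row (KK_band n t) i" by (simp add: row_def KK_band_def)
  moreover have "finite (row (KK_band n t) i)"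
    by (rule finite_subset[of _ "{1..n}"]) (auto simp: row_def KK_band_def KK_V_def)
  ultimately show ?thesis
    using card_row_KK_band[OF assms] by (simp add: row_band_with_corners)
qed

lemma card_col_band_with_corners:
  assumes "j \<in> {1..n}" "t \<le> n"
  shows "card (col (band_with_corners n t) j) = t + of_bool (j \<in> corner_cols n t)"
proof -
  have "j - t \<notin> col (KK_band n t) j" if "j \<in> corner_cols n t"
    using that corner_rows_bounds(1) by (force simp: col_def KK_band_def corner_cols_def)
  moreover have "finite (col (KK_band n t) j)"
    by (rule finite_subset[of _ "{1..n}"]) (auto simp: col_def KK_band_def KK_V_def)
  ultimately show ?thesis
    using card_col_KK_band[OF assms] by (simp add: col_band_with_corners)
qed

lemma row_band_with_corners_corner:
  assumes "a \<in> corner_rows n t"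
  shows "row (band_with_corners n t) a = {a..a + t}"
proof -
  have "row (KK_band n t) a = {a..<a + t}"
    using corner_rows_bounds[OF assms] by (auto simp: row_def KK_band_def KK_V_def)
  then show ?thesis using assms by (auto simp: row_band_with_corners)
qed

lemma col_band_with_corners_corner:
  assumes "a \<in> corner_rows n t"
  shows "col (band_with_corners n t) (a + t) = {a..a + t}"
proof -
  have "col (KK_band n t) (a + t) = {a + 1..a + t}"
    using corner_rows_bounds[OF assms] by (auto simp: col_def KK_band_def KK_V_def)
  moreover have "a + t \<in> corner_cols n t" using assms by (simp add: corner_cols_def)
  ultimately show ?thesis by (auto simp: col_band_with_corners)
qed

lemma card_band_with_corners:
  assumes "t \<le> n"
  shows "card (band_with_corners n t) = n * t + n div (t + 1)"
proof -
  have "KK_band n t \<subseteq> KK_V n" by (auto simp: KK_band_def)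
  then have "card (KK_band n t) = n * t"
    using assms by (simp add: card_KK_by_rows card_row_KK_band)
  moreover have "card ((\<lambda>a. (a, a + t)) ` corner_rows n t) = n div (t + 1)"
    by (simp add: card_image inj_on_def card_corner_rows)
  moreover have "KK_band n t \<inter> (\<lambda>a. (a, a + t)) ` corner_rows n t = {}"
    by (auto simp: KK_band_def)
  moreover have "finite (KK_band n t)" "finite (corner_rows n t)"
    using \<open>KK_band n t \<subseteq> KK_V n\<close> finite_KK_V finite_subset by (auto simp: corner_rows_def)
  ultimately show ?thesis
    by (simp add: band_with_corners_def card_Un_disjoint)
qed

lemma band_with_corners_subset: "band_with_corners n t \<subseteq> KK_V n"
  using corner_rows_bounds by (fastforce simp: band_with_corners_def KK_band_def KK_V_def)

lemma corner_mem_band_with_corners: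
  "a \<in> corner_rows n t \<Longrightarrow> (a, a + t) \<in> band_with_corners n t"
  by (simp add: band_with_corners_def)

lemma DeltaS_band_with_corners_same_col:
  assumes "n \<ge> 3" "t \<le> n" "i \<in> {1..n}" "i' \<in> {1..n}" "j \<in> {1..n}" "i \<noteq> i'"
  shows "DeltaS (KK_V n) KK_adj (band_with_corners n t) (i, j) (i', j) \<le> 2 * t + 3"
proof -
  let ?T = "band_with_corners n t"
  have "\<not> (i \<in> corner_rows n t \<and> i' \<in> corner_rows n t \<and> j \<in> row ?T i \<and> j \<in> row ?T i')"
    using corner_blocks_disjoint[of i n t i'] assms(6) by (auto simp: row_band_with_corners_corner)
  moreover have "(i, j) \<in> KK_V n" "(i', j) \<in> KK_V n" using assms(3-5) by (auto simp: KK_V_def)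
  ultimately show ?thesis
    using DeltaS_KK_same_col[OF assms(1) band_with_corners_subset _ _ assms(6)]
      card_row_band_with_corners[OF assms(3,2)] card_row_band_with_corners[OF assms(4,2)]
    by (auto simp: row_def)
qed

lemma DeltaS_band_with_corners_same_row:
  assumes "n \<ge> 3" "t \<le> n" "i \<in> {1..n}" "j \<in> {1..n}" "j' \<in> {1..n}" "j \<noteq> j'"
  shows "DeltaS (KK_V n) KK_adj (band_with_corners n t) (i, j) (i, j') \<le> 2 * t + 3"
proof -
  let ?T = "band_with_corners n t"
  have "\<not> (i \<in> col ?T j \<and> i \<in> col ?T j')"
    if corner: "j \<in> corner_cols n t" "j' \<in> corner_cols n t"
  proof -
    obtain a a' where "a \<in> corner_rows n t" "a' \<in> corner_rows n t" "j = a + t" "j' = a' + t"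
      using corner by (auto simp: corner_cols_def)
    with assms(6) show ?thesis
      using corner_blocks_disjoint[of a n t a'] by (auto simp: col_band_with_corners_corner)
  qed
  moreover have "(i, j) \<in> KK_V n" "(i, j') \<in> KK_V n" using assms(3-5) by (auto simp: KK_V_def)
  ultimately show ?thesis
    using DeltaS_KK_same_row[OF assms(1) band_with_corners_subset _ _ assms(6)]
      card_col_band_with_corners[OF assms(4,2)] card_col_band_with_corners[OF assms(5,2)]
    by (auto simp: col_def)
qed

lemma corner_hit_single_block:
  assumes "card (corner_rows n t) \<le> 1" "r \<in> corner_rows n t" "s \<in> corner_cols n t"
  shows "(r, s) \<in> band_with_corners n t"
proof -
  obtain b where "b \<in> corner_rows n t" "s = b + t" using assms(3) by (auto simp: corner_cols_def)
  moreover have "finite (corner_rows n t)" by (simp add: corner_rows_def)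
  ultimately have "b = r" using assms(1,2) card_le_Suc0_iff_eq by auto
  with \<open>b \<in> corner_rows n t\<close> \<open>s = b + t\<close> show ?thesis by (simp add: corner_mem_band_with_corners)
qed

lemma corner_hit_two_blocks:
  assumes "card (corner_rows n t) \<le> 2" "i \<in> corner_rows n t" "i' \<in> corner_rows n t" "i \<noteq> i'"
    and "j \<in> corner_cols n t"
  shows "(i, j) \<in> band_with_corners n t \<or> (i', j) \<in> band_with_corners n t"
proof -
  obtain b where "b \<in> corner_rows n t" "j = b + t" using assms(5) by (auto simp: corner_cols_def)
  have "b \<in> {i, i'}"
  proof (rule ccontr)
    assume "b \<notin> {i, i'}"
    then have "card {i, i', b} = 3" using assms(4) by simp
    moreover have "card {i, i', b} \<le> card (corner_rows n t)"
      using assms(2,3) \<open>b \<in> corner_rows n t\<close> by (intro card_mono) (auto simp: corner_rows_def)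
    ultimately show False using assms(1) by simp
  qed
  then show ?thesis using corner_mem_band_with_corners[OF \<open>b \<in> corner_rows n t\<close>] \<open>j = b + t\<close> by auto
qed

lemma DeltaS_band_with_corners_general:
  assumes "n \<ge> 6" "1 \<le> t" "t + 3 \<le> n" "(i, j) \<in> KK_V n" "(i', j') \<in> KK_V n" "i \<noteq> i'" "j \<noteq> j'"
  shows "DeltaS (KK_V n) KK_adj (band_with_corners n t) (i, j) (i', j') + 5 \<le> 2 * n + 2 * t"
proof -
  let ?T = "band_with_corners n t" and ?R = "corner_rows n t" and ?C = "corner_cols n t"
  define a :: nat where "a = of_bool (i \<in> ?R) + of_bool (i' \<in> ?R) + of_bool (j \<in> ?C) + of_bool (j' \<in> ?C)"
  define c :: nat where "c = of_bool ((i, j) \<in> ?T) + of_bool ((i', j') \<in> ?T)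
    + 2 * of_bool ((i, j') \<in> ?T) + 2 * of_bool ((i', j) \<in> ?T)"
  have ij: "i \<in> {1..n}" "i' \<in> {1..n}" "j \<in> {1..n}" "j' \<in> {1..n}"
    using assms(4,5) by (auto simp: KK_V_def)
  have "DeltaS (KK_V n) KK_adj ?T (i, j) (i', j') + c
      = card (row ?T i) + card (row ?T i') + card (col ?T j) + card (col ?T j')"
    unfolding c_def
    using DeltaS_KK_general[OF _ band_with_corners_subset[of n t] assms(4-7)] assms(1) by simp
  also have "\<dots> = 4 * t + a"
    using assms(3) ij by (simp add: a_def card_row_band_with_corners card_col_band_with_corners)
  finally have "DeltaS (KK_V n) KK_adj ?T (i, j) (i', j') + c = 4 * t + a" .
  moreover have "a + 2 * t + 5 \<le> 2 * n + c"
  proof -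
    consider "t + 5 \<le> n" | "n = t + 4" | "n = t + 3" using assms(3) by linarith
    then show ?thesis
    proof cases
      case 1
      then show ?thesis by (simp add: a_def)
    next
      case 2
      then have "card ?R \<le> 2"
        using assms(1) by (simp add: card_corner_rows less_mult_imp_div_less less_Suc_eq_le[symmetric])
      then have "i \<in> ?R \<and> i' \<in> ?R \<and> j \<in> ?C \<longrightarrow> (i, j) \<in> ?T \<or> (i', j) \<in> ?T"
        using corner_hit_two_blocks assms(6) by blast
      then show ?thesis using 2 unfolding a_def c_def by auto
    next
      case 3
      then have "card ?R \<le> 1"
        using assms(1) by (simp add: card_corner_rows less_mult_imp_div_less less_Suc_eq_le[symmetric])
      moreover have "finite ?R" by (simp add: corner_rows_def)
      ultimately have "r = r'" if "r \<in> ?R" "r' \<in> ?R" for r r'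
        using that card_le_Suc0_iff_eq by auto
      then have "\<not> (i \<in> ?R \<and> i' \<in> ?R)" "\<not> (j \<in> ?C \<and> j' \<in> ?C)"
        using assms(6,7) by (auto simp: corner_cols_def)
      moreover have "r \<in> ?R \<and> s \<in> ?C \<longrightarrow> (r, s) \<in> ?T" for r s
        using corner_hit_single_block[OF \<open>card ?R \<le> 1\<close>] by blast
      ultimately show ?thesis using 3 unfolding a_def c_def by auto
    qed
  qed
  ultimately show ?thesis using assms(3) by linarith
qed

lemma weak_resolving_complement_band_with_corners:
  assumes "n \<ge> 6" "1 \<le> t" "t + 3 \<le> n"
  shows "weak_k_resolving (KK_V n) KK_adj (2 * n - 2 * t - 1) (KK_V n - band_with_corners n t)"
  unfolding weak_k_resolving_Diff_iff[OF finite_KK_V band_with_corners_subset]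
proof (intro ballI impI)
  fix x y assume "x \<in> KK_V n" "y \<in> KK_V n" "x \<noteq> y"
  obtain i j i' j' where xy: "x = (i, j)" "y = (i', j')" by (cases x, cases y)
  have n3: "n \<ge> 3" and tn: "t \<le> n" using assms by simp_all
  have ij: "i \<in> {1..n}" "i' \<in> {1..n}" "j \<in> {1..n}" "j' \<in> {1..n}"
    using \<open>x \<in> KK_V n\<close> \<open>y \<in> KK_V n\<close> xy by (auto simp: KK_V_def)
  consider "j = j'" "i \<noteq> i'" | "i = i'" "j \<noteq> j'" | "i \<noteq> i'" "j \<noteq> j'"
    using \<open>x \<noteq> y\<close> xy by blast
  then show "DeltaS (KK_V n) KK_adj (band_with_corners n t) x y + (2 * n - 2 * t - 1)
      \<le> DeltaS (KK_V n) KK_adj (KK_V n) x y"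
  proof cases
    case 1
    then show ?thesis
      using DeltaS_band_with_corners_same_col[OF n3 tn ij(1,2,3) 1(2)]
        DeltaS_KK_V_same_col[OF n3 _ _ 1(2)] \<open>x \<in> KK_V n\<close> \<open>y \<in> KK_V n\<close> xy assms(3)
      by simp
  next
    case 2
    then show ?thesis
      using DeltaS_band_with_corners_same_row[OF n3 tn ij(1,3,4) 2(2)]
        DeltaS_KK_V_same_row[OF n3 _ _ 2(2)] \<open>x \<in> KK_V n\<close> \<open>y \<in> KK_V n\<close> xy assms(3)
      by simp
  next
    case 3
    have V: "(i, j) \<in> KK_V n" "(i', j') \<in> KK_V n"
      using \<open>x \<in> KK_V n\<close> \<open>y \<in> KK_V n\<close> xy by simp_all
    show ?thesis
      using DeltaS_band_with_corners_general[OF assms V 3] DeltaS_KK_V_general[OF n3 V 3] assms(3)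
      unfolding xy by linarith
  qed
qed

theorem mainTheorem11:
  fixes n t :: nat
  assumes "n \<ge> 6" and "1 \<le> t" and "t \<le> n - 3"
  shows "wdim (KK_V n) KK_adj (2*n - 2*t - 1) = n^2 - t*n - n div (t + 1)"
proof -
  have "t + 3 \<le> n" using assms by linarith
  let ?T = "band_with_corners n t"
  have card_Diff: "card (KK_V n - X) = n\<^sup>2 - card X" if "X \<subseteq> KK_V n" for X
    using that by (simp add: card_Diff_subset finite_subset[OF _ finite_KK_V] KK_V_def power2_eq_square)
  have "wdim (KK_V n) KK_adj (2 * n - 2 * t - 1) = card (KK_V n - ?T)"
  proof (rule wdim_eqI[OF finite_KK_V weak_resolving_complement_band_with_corners[OF assms(1,2)]])
    show "t + 3 \<le> n" by fact
    fix S assume S: "weak_k_resolving (KK_V n) KK_adj (2 * n - 2 * t - 1) S"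
    then have "S = KK_V n - (KK_V n - S)" by (auto simp: weak_k_resolving_def)
    then have "card S = n\<^sup>2 - card (KK_V n - S)" using card_Diff[of "KK_V n - S"] by auto
    moreover have "card (KK_V n - S) \<le> card ?T"
      using card_Diff_le_of_weak_resolving[OF _ _ S] card_band_with_corners \<open>t + 3 \<le> n\<close> assms(1)
      by simp
    ultimately show "card (KK_V n - ?T) \<le> card S"
      using card_Diff[OF band_with_corners_subset] by simp
  qed
  also have "\<dots> = n^2 - t*n - n div (t + 1)"
    using card_Diff[OF band_with_corners_subset] card_band_with_corners \<open>t + 3 \<le> n\<close>
    by (simp add: mult.commute)
  finally show ?thesis .
qed

end
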